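(* Let $\tau$ be a continuous distributive triangle function on $\Delta^+$, $\Sigma$ a $\sigma$-ring of subsets of $\Omega\ne\emptyset$, $\gamma$ a $\tau$-decomposable measure on $\Sigma$ continuous from below, and $f$ a simple function. If $E_n\in\Sigma$, $E_n\subseteq E_{n+1}$ for all $n$ and $\bigcup_n E_n=E$, then $\lim_{n\to\infty}\int_{E_n} f\,d\gamma=\int_E f\,d\gamma$ (weak limit).
   Context: $\Delta^+$: functions $F:[-\infty,+\infty]\to[0,1]$ non-decreasing, left-continuous on $\mathbb{R}$, $F(x)=0$ for $x\le0$, $F(+\infty)=1$; $\varepsilon_a(x)=1$ if $x>a$, else $0$. Triangle function: symmetric, associative $\tau:\Delta^+\times\Delta^+\to\Delta^+$, non-decreasing in each variable, identity $\varepsilon_0$; $G\oplus H=\tau(G,H)$, $\bigoplus_{k=1}^nG_k=\tau(G_1,\bigoplus_{k=2}^nG_k)$. $c\odot G=\varepsilon_0$ if $c=0$, $(c\odot G)(x)=G(x/c)$ if $c>0$; $\tau$ distributive if $c\odot(G\oplus H)=(c\odot G)\oplus(c\odot H)$ for all $c\ge0$. Convergence in $\Delta^+$ is weak convergence ($G_n(x)\to G(x)$ at every continuity point $x\in\mathbb{R}$ of $G$); $\tau$ continuous if continuous for it. $\tau$-decomposable measure on a ring $\Sigma$: $\gamma:\Sigma\to\Delta^+$, $\gamma_\emptyset=\varepsilon_0$, $\gamma_{E\cup F}=\tau(\gamma_E,\gamma_F)$ for disjoint $E,F$; continuous from below: $\gamma_{E_n}\to\gamma_E$ whenever $E_n\subseteq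 E_{n+1}$, $\bigcup E_n=E$ in $\Sigma$. A simple function is $f=\sum_{i=1}^mx_i\chi_{G_i}$ with $x_i\in[0,\infty)$, $G_i\in\Sigma$ pairwise disjoint, and $\int_Ef\,d\gamma=\bigoplus_{i=1}^mx_i\odot\gamma_{E\cap G_i}$. *)

theory Defs
  imports "HOL-Analysis.Analysis"
begin

type_synonym dist = "ereal \<Rightarrow> real"

definition Delta_plus :: "dist set" where
  "Delta_plus = {F. (\<forall>x. 0 \<le> F x \<and> F x \<le> 1) \<and> mono F
      \<and> (\<forall>x::real. continuous (at_left x) (\<lambda>t. F (ereal t)))
      \<and> (\<forall>x. x \<le> 0 \<longrightarrow> F x = 0) \<and> F \<infinity> = 1}"

definition eps :: "real \<Rightarrow> dist" where
  "eps a = (\<lambda>x. if x > ereal a then 1 else 0)"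

definition le_dist :: "dist \<Rightarrow> dist \<Rightarrow> bool" where
  "le_dist F G \<longleftrightarrow> (\<forall>x. F x \<le> G x)"

definition triangle_function :: "(dist \<Rightarrow> dist \<Rightarrow> dist) \<Rightarrow> bool" where
  "triangle_function \<tau> \<longleftrightarrow>
     (\<forall>G\<in>Delta_plus. \<forall>H\<in>Delta_plus. \<tau> G H \<in> Delta_plus)
   \<and> (\<forall>G\<in>Delta_plus. \<forall>H\<in>Delta_plus. \<tau> G H = \<tau> H G)
   \<and> (\<forall>G\<in>Delta_plus. \<forall>H\<in>Delta_plus. \<forall>K\<in>Delta_plus. \<tau> G (\<tau> H K) = \<tau> (\<tau> G H) K)
   \<and> (\<forall>G\<in>Delta_plus. \<forall>G'\<in>Delta_plus. \<forall>H\<in>Delta_plus.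
         le_dist G G' \<longrightarrow> le_dist (\<tau> G H) (\<tau> G' H))
   \<and> (\<forall>G\<in>Delta_plus. \<tau> G (eps 0) = G)"

definition smul :: "real \<Rightarrow> dist \<Rightarrow> dist" where
  "smul c G = (if c = 0 then eps 0 else (\<lambda>x. G (x / ereal c)))"

definition distributive :: "(dist \<Rightarrow> dist \<Rightarrow> dist) \<Rightarrow> bool" where
  "distributive \<tau> \<longleftrightarrow> (\<forall>c\<ge>0. \<forall>G\<in>Delta_plus. \<forall>H\<in>Delta_plus.
       smul c (\<tau> G H) = \<tau> (smul c G) (smul c H))"

definition wconv :: "(nat \<Rightarrow> dist) \<Rightarrow> dist \<Rightarrow> bool" where
  "wconv Gs G \<longleftrightarrow> (\<forall>x::real. isCont (\<lambda>t. G (ereal t)) x \<longrightarrow>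
       (\<lambda>n. Gs n (ereal x)) \<longlonglongrightarrow> G (ereal x))"

definition continuous_tf :: "(dist \<Rightarrow> dist \<Rightarrow> dist) \<Rightarrow> bool" where
  "continuous_tf \<tau> \<longleftrightarrow> (\<forall>Gs G Hs H. range Gs \<subseteq> Delta_plus \<longrightarrow> G \<in> Delta_plus \<longrightarrow>
       range Hs \<subseteq> Delta_plus \<longrightarrow> H \<in> Delta_plus \<longrightarrow> wconv Gs G \<longrightarrow> wconv Hs H \<longrightarrow>
       wconv (\<lambda>n. \<tau> (Gs n) (Hs n)) (\<tau> G H))"

definition sigma_ring :: "'a set \<Rightarrow> 'a set set \<Rightarrow> bool" where
  "sigma_ring \<Omega> S \<longleftrightarrow> ring_of_sets \<Omega> S \<and> (\<forall>A::nat \<Rightarrow> 'a set. range A \<subseteq> S \<longrightarrow> (\<Union>n. A n) \<in> S)"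

definition decomposable_measure ::
    "(dist \<Rightarrow> dist \<Rightarrow> dist) \<Rightarrow> 'a set set \<Rightarrow> ('a set \<Rightarrow> dist) \<Rightarrow> bool" where
  "decomposable_measure \<tau> S \<gamma> \<longleftrightarrow> (\<forall>E\<in>S. \<gamma> E \<in> Delta_plus) \<and> \<gamma> {} = eps 0
     \<and> (\<forall>E\<in>S. \<forall>F\<in>S. E \<inter> F = {} \<longrightarrow> \<gamma> (E \<union> F) = \<tau> (\<gamma> E) (\<gamma> F))"

definition cont_from_below :: "'a set set \<Rightarrow> ('a set \<Rightarrow> dist) \<Rightarrow> bool" where
  "cont_from_below S \<gamma> \<longleftrightarrow> (\<forall>En E. range En \<subseteq> S \<longrightarrow> E \<in> S \<longrightarrow> incseq En \<longrightarrow>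
       (\<Union>n. En n) = E \<longrightarrow> wconv (\<lambda>n. \<gamma> (En n)) (\<gamma> E))"

fun bigop :: "(dist \<Rightarrow> dist \<Rightarrow> dist) \<Rightarrow> dist list \<Rightarrow> dist" where
  "bigop \<tau> [] = eps 0"
| "bigop \<tau> [G] = G"
| "bigop \<tau> (G # Gs) = \<tau> G (bigop \<tau> Gs)"

text \<open>Integral over E of the simple function sum_{i<m} x i * chi_{G i}.\<close>
definition simple_integral ::
    "(dist \<Rightarrow> dist \<Rightarrow> dist) \<Rightarrow> ('a set \<Rightarrow> dist) \<Rightarrow> nat \<Rightarrow> (nat \<Rightarrow> real) \<Rightarrow> (nat \<Rightarrow> 'a set) \<Rightarrow> 'a set \<Rightarrow> dist" where
  "simple_integral \<tau> \<gamma> m x G E = bigop \<tau> (map (\<lambda>i. smul (x i) (\<gamma> (E \<inter> G i))) [0..<m])"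

end

theory Submission
  imports Defs
begin

text \<open>Each summand \<open>x\<^sub>i \<odot> \<gamma>(E\<^sub>n \<inter> G\<^sub>i)\<close> converges weakly by continuity from below and
  because scaling the argument preserves continuity points; a finite \<open>\<tau>\<close>-sum of weakly
  convergent sequences converges to the \<open>\<tau>\<close>-sum of the limits, by continuity of \<open>\<tau>\<close> and
  induction on the number of summands.\<close>

lemma eps_in_Delta_plus:
  assumes "a \<ge> 0"
  shows "eps a \<in> Delta_plus"
proof -
  have "continuous (at_left x) (\<lambda>t. eps a (ereal t))" for x :: real
  proof (cases "x \<le> a")
    case True
    have "eventually (\<lambda>t. t \<in> {x-1<..<x}) (at_left x)"
      by (rule eventually_at_left_real) simp
    hence "eventually (\<lambda>t. eps a (ereal t) = 0) (at_left x)"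
      by eventually_elim (use True in \<open>auto simp: eps_def\<close>)
    hence "((\<lambda>t. eps a (ereal t)) \<longlongrightarrow> 0) (at_left x)" by (rule tendsto_eventually)
    then show ?thesis using True by (simp add: continuous_within eps_def)
  next
    case False
    have "eventually (\<lambda>t. t \<in> {a<..<x}) (at_left x)"
      by (rule eventually_at_left_real) (use False in simp)
    hence "eventually (\<lambda>t. eps a (ereal t) = 1) (at_left x)"
      by eventually_elim (auto simp: eps_def)
    hence "((\<lambda>t. eps a (ereal t)) \<longlongrightarrow> 1) (at_left x)" by (rule tendsto_eventually)
    then show ?thesis using False by (simp add: continuous_within eps_def)
  qed
  moreover have "mono (eps a)"
    unfolding mono_def eps_def by (auto dest: less_le_trans)
  moreover have "eps a y = 0" if "y \<le> 0" for y
    using that assms by (cases y) (auto simp: eps_def)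
  ultimately show ?thesis
    unfolding Delta_plus_def by (auto simp: eps_def)
qed

lemma smul_in_Delta_plus:
  assumes c: "c \<ge> 0" and F: "F \<in> Delta_plus"
  shows "smul c F \<in> Delta_plus"
proof (cases "c = 0")
  case True
  then show ?thesis by (simp add: smul_def eps_in_Delta_plus)
next
  case False
  hence cp: "c > 0" using c by simp
  have smul_eq: "smul c F = (\<lambda>y. F (y / ereal c))" using False by (simp add: smul_def)
  have Fb: "\<And>x. 0 \<le> F x \<and> F x \<le> 1" and Fm: "mono F"
    and Fl: "\<And>x::real. continuous (at_left x) (\<lambda>t. F (ereal t))"
    and F0: "\<And>x. x \<le> 0 \<Longrightarrow> F x = 0" and Finf: "F \<infinity> = 1"
    using F unfolding Delta_plus_def by auto
  have mono: "mono (\<lambda>y. F (y / ereal c))"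
    unfolding mono_def using cp by (auto intro!: monoD[OF Fm] ereal_divide_right_mono)
  have left_cont: "continuous (at_left x) (\<lambda>t. F (ereal t / ereal c))" for x :: real
  proof -
    have "((\<lambda>t. F (ereal t)) \<longlongrightarrow> F (ereal (x / c))) (at_left (x / c))"
      using Fl[of "x / c"] by (simp add: continuous_within)
    moreover have "filterlim (\<lambda>t. t / c) (at_left (x / c)) (at_left x)"
    proof (rule tendsto_imp_filterlim_at_left)
      show "((\<lambda>t. t / c) \<longlongrightarrow> x / c) (at_left x)"
        using False by (intro tendsto_intros)
      have "eventually (\<lambda>t. t \<in> {x-1<..<x}) (at_left x)"
        by (rule eventually_at_left_real) simp
      then show "eventually (\<lambda>t. t / c < x / c) (at_left x)"
        by eventually_elim (use cp in \<open>auto simp: divide_strict_right_mono\<close>)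
    qed
    ultimately have "((\<lambda>t. F (ereal (t / c))) \<longlongrightarrow> F (ereal (x / c))) (at_left x)"
      by (rule filterlim_compose)
    then show ?thesis using False by (simp add: continuous_within)
  qed
  have "F (y / ereal c) = 0" if "y \<le> 0" for y
    using that cp F0 by (cases y) (auto simp: divide_nonpos_pos)
  then show ?thesis
    unfolding smul_eq Delta_plus_def using Fb mono left_cont Finf cp by auto
qed

lemma triangle_function_in_Delta_plus:
  assumes "triangle_function \<tau>" "G \<in> Delta_plus" "H \<in> Delta_plus"
  shows "\<tau> G H \<in> Delta_plus"
  using assms unfolding triangle_function_def by blast

lemma bigop_in_Delta_plus:
  assumes "triangle_function \<tau>" "set Fs \<subseteq> Delta_plus"
  shows "bigop \<tau> Fs \<in> Delta_plus"
  using assms(2)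
  by (induction Fs rule: induct_list012)
     (auto simp: eps_in_Delta_plus triangle_function_in_Delta_plus[OF assms(1)])

lemma wconv_const: "wconv (\<lambda>n. F) F"
  unfolding wconv_def by simp

lemma wconv_smul:
  assumes c: "c \<ge> 0" and conv: "wconv Fs F"
  shows "wconv (\<lambda>n. smul c (Fs n)) (smul c F)"
proof (cases "c = 0")
  case True
  then show ?thesis by (simp add: smul_def wconv_const)
next
  case False
  show ?thesis unfolding wconv_def
  proof (intro allI impI)
    fix t :: real
    assume "isCont (\<lambda>s. smul c F (ereal s)) t"
    hence "isCont (\<lambda>s. F (ereal (s / c))) t" using False by (simp add: smul_def)
    hence "isCont ((\<lambda>s. F (ereal (s / c))) \<circ> (\<lambda>s. c * s)) (t / c)"
      by (intro continuous_at_compose) (use False in \<open>auto intro!: continuous_intros\<close>)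
    hence "isCont (\<lambda>s. F (ereal s)) (t / c)" using False by (simp add: o_def)
    hence "(\<lambda>n. Fs n (ereal (t / c))) \<longlonglongrightarrow> F (ereal (t / c))"
      using conv unfolding wconv_def by blast
    then show "(\<lambda>n. smul c (Fs n) (ereal t)) \<longlonglongrightarrow> smul c F (ereal t)"
      using False by (simp add: smul_def)
  qed
qed

lemma wconv_tau:
  assumes "continuous_tf \<tau>"
    and "range Gs \<subseteq> Delta_plus" "G \<in> Delta_plus" "wconv Gs G"
    and "range Hs \<subseteq> Delta_plus" "H \<in> Delta_plus" "wconv Hs H"
  shows "wconv (\<lambda>n. \<tau> (Gs n) (Hs n)) (\<tau> G H)"
  using assms unfolding continuous_tf_def by blast

lemma wconv_bigop:
  assumes T: "triangle_function \<tau>" and C: "continuous_tf \<tau>"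
    and Fs: "\<And>i n. i \<in> set L \<Longrightarrow> Fs i n \<in> Delta_plus"
    and F: "\<And>i. i \<in> set L \<Longrightarrow> F i \<in> Delta_plus"
    and conv: "\<And>i. i \<in> set L \<Longrightarrow> wconv (Fs i) (F i)"
  shows "wconv (\<lambda>n. bigop \<tau> (map (\<lambda>i. Fs i n) L)) (bigop \<tau> (map F L))"
  using Fs F conv
proof (induction L rule: induct_list012)
  case 1
  then show ?case by (simp add: wconv_const)
next
  case (2 a)
  then show ?case by simp
next
  case (3 a b zs)
  have "wconv (\<lambda>n. \<tau> (Fs a n) (bigop \<tau> (map (\<lambda>i. Fs i n) (b # zs))))
              (\<tau> (F a) (bigop \<tau> (map F (b # zs))))"
    using 3 by (intro wconv_tau[OF C]) (auto intro!: bigop_in_Delta_plus[OF T])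
  then show ?case by simp
qed

lemma wconv_cont_from_below_Int:
  assumes R: "ring_of_sets \<Omega> S" and cfb: "cont_from_below S \<gamma>"
    and En: "\<And>n. En n \<in> S" "incseq En" and E: "E \<in> S" "(\<Union>n. En n) = E"
    and A: "A \<in> S"
  shows "wconv (\<lambda>n. \<gamma> (En n \<inter> A)) (\<gamma> (E \<inter> A))"
proof -
  have "range (\<lambda>n. En n \<inter> A) \<subseteq> S" "E \<inter> A \<in> S"
    using En(1) E(1) A semiring_of_sets.Int[OF ring_of_sets.axioms(1)[OF R]] by auto
  moreover have "incseq (\<lambda>n. En n \<inter> A)"
    using En(2) by (auto simp: incseq_def)
  moreover have "(\<Union>n. En n \<inter> A) = E \<inter> A"
    using E(2) by auto
  ultimately show ?thesis
    using cfb unfolding cont_from_below_def by blast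
qed

theorem lemma5p1:
  fixes \<tau> :: "dist \<Rightarrow> dist \<Rightarrow> dist" and \<Omega> :: "'a set" and S :: "'a set set"
    and \<gamma> :: "'a set \<Rightarrow> dist" and f :: "'a \<Rightarrow> real"
    and m :: nat and x :: "nat \<Rightarrow> real" and G :: "nat \<Rightarrow> 'a set"
    and En :: "nat \<Rightarrow> 'a set" and E :: "'a set"
  assumes "triangle_function \<tau>" and "continuous_tf \<tau>" and "distributive \<tau>"
    and "sigma_ring \<Omega> S" and "\<Omega> \<noteq> {}"
    and "decomposable_measure \<tau> S \<gamma>" and "cont_from_below S \<gamma>"
    and "\<forall>i<m. x i \<ge> 0 \<and> G i \<in> S"
    and "\<forall>i<m. \<forall>j<m. i \<noteq> j \<longrightarrow> G i \<inter> G j = {}"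
    and "f = (\<lambda>\<omega>. \<Sum>i<m. x i * indicator (G i) \<omega>)"
    and "\<forall>n. En n \<in> S" and "\<forall>n. En n \<subseteq> En (Suc n)" and "(\<Union>n. En n) = E"
  shows "wconv (\<lambda>n. simple_integral \<tau> \<gamma> m x G (En n)) (simple_integral \<tau> \<gamma> m x G E)"
proof -
  have R: "ring_of_sets \<Omega> S" and ES: "E \<in> S"
    using assms(4,11,13) unfolding sigma_ring_def by blast+
  have inc: "incseq En"
    using assms(12) by (simp add: incseq_SucI)
  have in_Delta: "\<gamma> A \<in> Delta_plus" if "A \<in> S" for A
    using assms(6) that unfolding decomposable_measure_def by blast
  have terms: "i < m \<Longrightarrow> x i \<ge> 0 \<and> En n \<inter> G i \<in> S \<and> E \<inter> G i \<in> S" for i n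
    using assms(8,11) ES semiring_of_sets.Int[OF ring_of_sets.axioms(1)[OF R]] by blast
  show ?thesis
    unfolding simple_integral_def
  proof (rule wconv_bigop[OF assms(1,2)])
    fix i assume "i \<in> set [0..<m]"
    then show "wconv (\<lambda>n. smul (x i) (\<gamma> (En n \<inter> G i))) (smul (x i) (\<gamma> (E \<inter> G i)))"
      using terms assms(8,11,13) inc ES
      by (auto intro!: wconv_smul wconv_cont_from_below_Int[OF R assms(7)])
  qed (use terms in_Delta in \<open>auto intro!: smul_in_Delta_plus\<close>)
qed

end
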